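(* Let $M^2$ be a surface in $\mathbb{R}^4$ free of flat points. Then $M^2$ has flat normal connection (the curvature of its normal connection vanishes identically) if and only if at each point of $M^2$ the tangent indicatrix $\chi$ is a rectangular hyperbola (a Lorentz circle), i.e. the principal normal curvatures satisfy $\nu''=-\nu'\neq 0$.
   Context: Let $M^2: z=z(u,v)$ be a regular surface in $\mathbb{R}^4$ with first fundamental form $I=E\,du^2+2F\,du\,dv+G\,dv^2$, $W=\sqrt{EG-F^2}$. Choose an orthonormal normal frame $\{e_1,e_2\}$ with $\{z_u,z_v,e_1,e_2\}$ positively oriented, write $\sigma(z_u,z_u)=c_{11}^1e_1+c_{11}^2e_2$, $\sigma(z_u,z_v)=c_{12}^1e_1+c_{12}^2e_2$, $\sigma(z_v,z_v)=c_{22}^1e_1+c_{22}^2e_2$ ($\sigma$ the second fundamental form), and set $L=\frac{2}{W}(c_{11}^1c_{12}^2-c_{12}^1c_{11}^2)$, $M=\frac{1}{W}(c_{11}^1c_{22}^2-c_{22}^1c_{11}^2)$, $N=\frac{2}{W}(c_{12}^1c_{22}^2-c_{22}^1c_{12}^2)$. A point is flat if $L=M=N=0$; "free of flat points" means $(L,M,N)\ne(0,0,0)$ everywhere. At each point, the principal normal curvatures $\nu',\nu''$ are the two roots of $(EG-F^2)\nu^2-(EN+GL-2FM)\nu+(LN-M^2)=0$ (the eigenvalues of $II=L\lambda^2+2M\lambda\mu+N\mu^2$ relative to $I$), with corresponding $I$-orthogonal principal directions. The tangent indicatrix $\chi$ at $p$ is the conic in $T_pM^2$ given, in Cartesian coordinates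 $(X,Y)$ with respect to an orthonormal basis of principal directions, by $\nu'X^2+\nu''Y^2=\varepsilon$, $\varepsilon=\pm1$. *)

theory Defs
  imports "HOL-Analysis.Analysis"
begin

definition pu :: "(real \<times> real \<Rightarrow> 'a::real_normed_vector) \<Rightarrow> real \<times> real \<Rightarrow> 'a" where
  "pu f p = vector_derivative (\<lambda>t. f (t, snd p)) (at (fst p))"

definition pv :: "(real \<times> real \<Rightarrow> 'a::real_normed_vector) \<Rightarrow> real \<times> real \<Rightarrow> 'a" where
  "pv f p = vector_derivative (\<lambda>t. f (fst p, t)) (at (snd p))"

fun Ck :: "nat \<Rightarrow> (real \<times> real \<Rightarrow> 'a::real_normed_vector) \<Rightarrow> (real \<times> real) set \<Rightarrow> bool" where
  "Ck 0 f U = continuous_on U f"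
| "Ck (Suc k) f U = ((\<forall>p\<in>U. f differentiable (at p)) \<and> Ck k (pu f) U \<and> Ck k (pv f) U)"

definition smooth_on :: "(real \<times> real \<Rightarrow> 'a::real_normed_vector) \<Rightarrow> (real \<times> real) set \<Rightarrow> bool" where
  "smooth_on f U \<longleftrightarrow> (\<forall>k. Ck k f U)"

definition regular_surface :: "(real \<times> real \<Rightarrow> real^4) \<Rightarrow> (real \<times> real) set \<Rightarrow> bool" where
  "regular_surface z U \<longleftrightarrow> open U \<and> smooth_on z U \<and>
     (\<forall>p\<in>U. \<forall>a b. a *\<^sub>R pu z p + b *\<^sub>R pv z p = 0 \<longrightarrow> a = 0 \<and> b = 0)"

definition EE :: "(real \<times> real \<Rightarrow> real^4) \<Rightarrow> real \<times> real \<Rightarrow> real" where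
  "EE z p = pu z p \<bullet> pu z p"
definition FF :: "(real \<times> real \<Rightarrow> real^4) \<Rightarrow> real \<times> real \<Rightarrow> real" where
  "FF z p = pu z p \<bullet> pv z p"
definition GG :: "(real \<times> real \<Rightarrow> real^4) \<Rightarrow> real \<times> real \<Rightarrow> real" where
  "GG z p = pv z p \<bullet> pv z p"
definition WW :: "(real \<times> real \<Rightarrow> real^4) \<Rightarrow> real \<times> real \<Rightarrow> real" where
  "WW z p = sqrt (EE z p * GG z p - (FF z p)\<^sup>2)"

definition normal_frame ::
  "(real \<times> real \<Rightarrow> real^4) \<Rightarrow> (real \<times> real) set \<Rightarrow> (real \<times> real \<Rightarrow> real^4) \<Rightarrow> (real \<times> real \<Rightarrow> real^4) \<Rightarrow> bool" where
  "normal_frame z U e1 e2 \<longleftrightarrow> smooth_on e1 U \<and> smooth_on e2 U \<and>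
     (\<forall>p\<in>U. e1 p \<bullet> e1 p = 1 \<and> e2 p \<bullet> e2 p = 1 \<and> e1 p \<bullet> e2 p = 0 \<and>
            e1 p \<bullet> pu z p = 0 \<and> e1 p \<bullet> pv z p = 0 \<and>
            e2 p \<bullet> pu z p = 0 \<and> e2 p \<bullet> pv z p = 0 \<and>
            det (vector [pu z p, pv z p, e1 p, e2 p] :: real^4^4) > 0)"

definition nproj :: "(real \<times> real \<Rightarrow> real^4) \<Rightarrow> (real \<times> real \<Rightarrow> real^4) \<Rightarrow> real \<times> real \<Rightarrow> real^4 \<Rightarrow> real^4" where
  "nproj e1 e2 p w = (w \<bullet> e1 p) *\<^sub>R e1 p + (w \<bullet> e2 p) *\<^sub>R e2 p"

definition sigma_uu where "sigma_uu z e1 e2 p = nproj e1 e2 p (pu (pu z) p)"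
definition sigma_uv where "sigma_uv z e1 e2 p = nproj e1 e2 p (pv (pu z) p)"
definition sigma_vv where "sigma_vv z e1 e2 p = nproj e1 e2 p (pv (pv z) p)"

definition c11_1 where "c11_1 z e1 e2 p = sigma_uu z e1 e2 p \<bullet> e1 p"
definition c11_2 where "c11_2 z e1 e2 p = sigma_uu z e1 e2 p \<bullet> e2 p"
definition c12_1 where "c12_1 z e1 e2 p = sigma_uv z e1 e2 p \<bullet> e1 p"
definition c12_2 where "c12_2 z e1 e2 p = sigma_uv z e1 e2 p \<bullet> e2 p"
definition c22_1 where "c22_1 z e1 e2 p = sigma_vv z e1 e2 p \<bullet> e1 p"
definition c22_2 where "c22_2 z e1 e2 p = sigma_vv z e1 e2 p \<bullet> e2 p"

definition LL :: "(real \<times> real \<Rightarrow> real^4) \<Rightarrow> (real \<times> real \<Rightarrow> real^4) \<Rightarrow> (real \<times> real \<Rightarrow> real^4) \<Rightarrow> real \<times> real \<Rightarrow> real" where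
  "LL z e1 e2 p = 2 / WW z p * (c11_1 z e1 e2 p * c12_2 z e1 e2 p - c12_1 z e1 e2 p * c11_2 z e1 e2 p)"
definition MM :: "(real \<times> real \<Rightarrow> real^4) \<Rightarrow> (real \<times> real \<Rightarrow> real^4) \<Rightarrow> (real \<times> real \<Rightarrow> real^4) \<Rightarrow> real \<times> real \<Rightarrow> real" where
  "MM z e1 e2 p = 1 / WW z p * (c11_1 z e1 e2 p * c22_2 z e1 e2 p - c22_1 z e1 e2 p * c11_2 z e1 e2 p)"
definition NN :: "(real \<times> real \<Rightarrow> real^4) \<Rightarrow> (real \<times> real \<Rightarrow> real^4) \<Rightarrow> (real \<times> real \<Rightarrow> real^4) \<Rightarrow> real \<times> real \<Rightarrow> real" where
  "NN z e1 e2 p = 2 / WW z p * (c12_1 z e1 e2 p * c22_2 z e1 e2 p - c22_1 z e1 e2 p * c12_2 z e1 e2 p)"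

definition flat_point where
  "flat_point z e1 e2 p \<longleftrightarrow> LL z e1 e2 p = 0 \<and> MM z e1 e2 p = 0 \<and> NN z e1 e2 p = 0"

definition principal_normal_curvatures where
  "principal_normal_curvatures z e1 e2 p nu1 nu2 \<longleftrightarrow>
     (\<forall>x::real. (EE z p * GG z p - (FF z p)\<^sup>2) * x\<^sup>2
        - (EE z p * NN z e1 e2 p + GG z p * LL z e1 e2 p - 2 * FF z p * MM z e1 e2 p) * x
        + (LL z e1 e2 p * NN z e1 e2 p - (MM z e1 e2 p)\<^sup>2)
      = (EE z p * GG z p - (FF z p)\<^sup>2) * (x - nu1) * (x - nu2))"

text \<open>Normal connection D along the coordinate fields, and its curvature
  R^perp(z_u,z_v) xi = D_u D_v xi - D_v D_u xi (coordinate fields commute).\<close>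
definition Dn_u where "Dn_u e1 e2 xi p = nproj e1 e2 p (pu xi p)"
definition Dn_v where "Dn_v e1 e2 xi p = nproj e1 e2 p (pv xi p)"

definition Rperp :: "(real \<times> real \<Rightarrow> real^4) \<Rightarrow> (real \<times> real \<Rightarrow> real^4) \<Rightarrow> (real \<times> real \<Rightarrow> real^4) \<Rightarrow> real \<times> real \<Rightarrow> real^4" where
  "Rperp e1 e2 xi p = Dn_u e1 e2 (Dn_v e1 e2 xi) p - Dn_v e1 e2 (Dn_u e1 e2 xi) p"

text \<open>Flat normal connection: the normal curvature tensor vanishes on the
  normal frame (hence, by tensoriality, on all normal fields) at every point.\<close>
definition flat_normal_connection where
  "flat_normal_connection U e1 e2 \<longleftrightarrow> (\<forall>p\<in>U. Rperp e1 e2 e1 p = 0 \<and> Rperp e1 e2 e2 p = 0)"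

end

theory Submission
  imports Defs
begin

text \<open>Put \<open>\<kappa> = \<langle>R\<^sup>\<perp>(z\<^sub>u, z\<^sub>v) e\<^sub>1, e\<^sub>2\<rangle>\<close>. Since \<open>R\<^sup>\<perp>(z\<^sub>u, z\<^sub>v) e\<^sub>1 = \<kappa> e\<^sub>2\<close> and
  \<open>R\<^sup>\<perp>(z\<^sub>u, z\<^sub>v) e\<^sub>2 = -\<kappa> e\<^sub>1\<close>, the normal connection is flat exactly where \<open>\<kappa> = 0\<close>.
  Expanding the derivatives of \<open>e\<^sub>1, e\<^sub>2\<close> in the frame \<open>z\<^sub>u, z\<^sub>v, e\<^sub>1, e\<^sub>2\<close> with the
  Weingarten relations \<open>\<langle>\<partial>e\<^sub>i, z\<^sub>u\<rangle> = -\<langle>\<sigma>(\<partial>, z\<^sub>u), e\<^sub>i\<rangle>\<close> gives the Ricci equation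
  \<open>EN + GL - 2FM = -2W\<kappa>\<close>, whose left-hand side is \<open>(EG - F\<^sup>2)(\<nu>' + \<nu>'')\<close>. So
  \<open>\<kappa> = 0\<close> iff \<open>\<nu>'' = -\<nu>'\<close>; and then at a non-flat point positive definiteness of the first
  fundamental form forces \<open>LN - M\<^sup>2 < 0\<close>, i.e. \<open>\<nu>'\<nu>'' < 0\<close>, so \<open>\<nu>' \<noteq> 0\<close>.\<close>

section \<open>Partial derivatives\<close>

lemma has_vector_derivative_pu:
  fixes f :: "real \<times> real \<Rightarrow> 'a::real_normed_vector"
  assumes "f differentiable (at p)"
  shows "((\<lambda>t. f (t, snd p)) has_vector_derivative pu f p) (at (fst p))"
proof -
  have "(\<lambda>t. (t, snd p)) differentiable (at (fst p))"
    by (intro derivative_intros)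
  with assms have "(f \<circ> (\<lambda>t. (t, snd p))) differentiable (at (fst p))"
    by (intro differentiable_chain_at) simp_all
  then show ?thesis
    unfolding pu_def vector_derivative_works[symmetric] by (simp add: o_def)
qed

lemma has_vector_derivative_pv:
  fixes f :: "real \<times> real \<Rightarrow> 'a::real_normed_vector"
  assumes "f differentiable (at p)"
  shows "((\<lambda>t. f (fst p, t)) has_vector_derivative pv f p) (at (snd p))"
proof -
  have "(\<lambda>t. (fst p, t)) differentiable (at (snd p))"
    by (intro derivative_intros)
  with assms have "(f \<circ> (\<lambda>t. (fst p, t))) differentiable (at (snd p))"
    by (intro differentiable_chain_at) simp_all
  then show ?thesis
    unfolding pv_def vector_derivative_works[symmetric] by (simp add: o_def)
qed

lemma has_real_derivative_inner:
  fixes f g :: "real \<Rightarrow> 'a::real_inner"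
  assumes "(f has_vector_derivative f') (at x)" "(g has_vector_derivative g') (at x)"
  shows "((\<lambda>t. f t \<bullet> g t) has_real_derivative (f' \<bullet> g x + f x \<bullet> g')) (at x)"
  using bounded_bilinear.has_vector_derivative[OF bounded_bilinear_inner assms]
  unfolding has_real_derivative_iff_has_vector_derivative by (simp add: add.commute)

lemma has_vector_derivative_eq_0_if_locally_const:
  fixes h :: "real \<Rightarrow> 'a::real_normed_vector"
  assumes "open S" "x \<in> S" "\<And>t. t \<in> S \<Longrightarrow> h t = c" "(h has_vector_derivative D) (at x)"
  shows "D = 0"
proof -
  have "(h has_vector_derivative 0) (at x)"
    using has_vector_derivative_transform_within_open[OF has_vector_derivative_const assms(1,2)] assms(3)
    by metis
  with assms(4) show ?thesis
    using vector_derivative_unique_at by blast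
qed

lemma pu_inner_const:
  fixes f g :: "real \<times> real \<Rightarrow> 'a::real_inner"
  assumes "open U" "p \<in> U" "\<forall>q\<in>U. f q \<bullet> g q = c"
    and "f differentiable (at p)" "g differentiable (at p)"
  shows "pu f p \<bullet> g p + f p \<bullet> pu g p = 0"
proof (rule has_vector_derivative_eq_0_if_locally_const)
  show "open {t. (t, snd p) \<in> U}"
    using continuous_open_vimage[OF assms(1), of "\<lambda>t. (t, snd p)"]
    by (auto intro!: continuous_intros simp: vimage_def)
  show "((\<lambda>t. f (t, snd p) \<bullet> g (t, snd p)) has_vector_derivative pu f p \<bullet> g p + f p \<bullet> pu g p) (at (fst p))"
    using has_real_derivative_inner[OF has_vector_derivative_pu has_vector_derivative_pu] assms(4,5)
    by (simp add: has_real_derivative_iff_has_vector_derivative)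
qed (use assms(2,3) in auto)

lemma pv_inner_const:
  fixes f g :: "real \<times> real \<Rightarrow> 'a::real_inner"
  assumes "open U" "p \<in> U" "\<forall>q\<in>U. f q \<bullet> g q = c"
    and "f differentiable (at p)" "g differentiable (at p)"
  shows "pv f p \<bullet> g p + f p \<bullet> pv g p = 0"
proof (rule has_vector_derivative_eq_0_if_locally_const)
  show "open {t. (fst p, t) \<in> U}"
    using continuous_open_vimage[OF assms(1), of "\<lambda>t. (fst p, t)"]
    by (auto intro!: continuous_intros simp: vimage_def)
  show "((\<lambda>t. f (fst p, t) \<bullet> g (fst p, t)) has_vector_derivative pv f p \<bullet> g p + f p \<bullet> pv g p) (at (snd p))"
    using has_real_derivative_inner[OF has_vector_derivative_pv has_vector_derivative_pv] assms(4,5)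
    by (simp add: has_real_derivative_iff_has_vector_derivative)
qed (use assms(2,3) in auto)

lemma dist_Pair_le_sum_abs:
  fixes x y a b :: real
  shows "dist (x, y) (a, b) \<le> \<bar>x - a\<bar> + \<bar>y - b\<bar>"
  using sqrt_sum_squares_le_sum_abs[of "x - a" "y - b"]
  by (simp add: dist_Pair_Pair dist_real_def)

section \<open>Symmetry of second derivatives\<close>

text \<open>Two applications of the mean value theorem to the second difference
  \<open>g(a+t,b+t) - g(a+t,b) - g(a,b+t) + g(a,b)\<close>, once in each order.\<close>

lemma mixed_partials_meet_in_square:
  fixes g gu gv guv gvu :: "real \<times> real \<Rightarrow> real"
  assumes t: "t > 0"
    and square: "\<And>x y. a \<le> x \<Longrightarrow> x \<le> a + t \<Longrightarrow> b \<le> y \<Longrightarrow> y \<le> b + t \<Longrightarrow> (x, y) \<in> U"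
    and du: "\<And>q. q \<in> U \<Longrightarrow> ((\<lambda>s. g (s, snd q)) has_real_derivative gu q) (at (fst q))"
    and dv: "\<And>q. q \<in> U \<Longrightarrow> ((\<lambda>s. g (fst q, s)) has_real_derivative gv q) (at (snd q))"
    and duv: "\<And>q. q \<in> U \<Longrightarrow> ((\<lambda>s. gu (fst q, s)) has_real_derivative guv q) (at (snd q))"
    and dvu: "\<And>q. q \<in> U \<Longrightarrow> ((\<lambda>s. gv (s, snd q)) has_real_derivative gvu q) (at (fst q))"
  obtains x1 y1 x2 y2 where "a < x1" "x1 < a + t" "b < y1" "y1 < b + t"
    "a < x2" "x2 < a + t" "b < y2" "y2 < b + t" "guv (x1, y1) = gvu (x2, y2)"
proof -
  define D where "D = g (a+t, b+t) - g (a+t, b) - g (a, b+t) + g (a, b)"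
  have "\<exists>x. a < x \<and> x < a + t \<and>
      (g (a+t, b+t) - g (a+t, b)) - (g (a, b+t) - g (a, b)) = ((a+t) - a) * (gu (x, b+t) - gu (x, b))"
    using t by (intro MVT2 DERIV_diff du[of "(_, b+t)", simplified] du[of "(_, b)", simplified] square) auto
  then obtain x1 where x1: "a < x1" "x1 < a + t" "D = t * (gu (x1, b+t) - gu (x1, b))"
    unfolding D_def by (auto simp: algebra_simps)
  have "\<exists>y. b < y \<and> y < b + t \<and> gu (x1, b+t) - gu (x1, b) = ((b+t) - b) * guv (x1, y)"
    using t x1 by (intro MVT2 duv[of "(x1, _)", simplified] square) auto
  then obtain y1 where y1: "b < y1" "y1 < b + t" "gu (x1, b+t) - gu (x1, b) = t * guv (x1, y1)"
    by auto
  have "\<exists>y. b < y \<and> y < b + t \<and>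
      (g (a+t, b+t) - g (a, b+t)) - (g (a+t, b) - g (a, b)) = ((b+t) - b) * (gv (a+t, y) - gv (a, y))"
    using t by (intro MVT2 DERIV_diff dv[of "(a+t, _)", simplified] dv[of "(a, _)", simplified] square) auto
  then obtain y2 where y2: "b < y2" "y2 < b + t" "D = t * (gv (a+t, y2) - gv (a, y2))"
    unfolding D_def by (auto simp: algebra_simps)
  have "\<exists>x. a < x \<and> x < a + t \<and> gv (a+t, y2) - gv (a, y2) = ((a+t) - a) * gvu (x, y2)"
    using t y2 by (intro MVT2 dvu[of "(_, y2)", simplified] square) auto
  then obtain x2 where x2: "a < x2" "x2 < a + t" "gv (a+t, y2) - gv (a, y2) = t * gvu (x2, y2)"
    by auto
  have "t * t * guv (x1, y1) = t * t * gvu (x2, y2)"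
    using x1(3) y1(3) y2(3) x2(3) by (metis mult.assoc)
  with t have "guv (x1, y1) = gvu (x2, y2)" by simp
  with x1 y1 x2 y2 show thesis by (intro that)
qed

lemma schwarz_real:
  fixes g gu gv guv gvu :: "real \<times> real \<Rightarrow> real"
  assumes U: "open U" "p \<in> U"
    and du: "\<And>q. q \<in> U \<Longrightarrow> ((\<lambda>s. g (s, snd q)) has_real_derivative gu q) (at (fst q))"
    and dv: "\<And>q. q \<in> U \<Longrightarrow> ((\<lambda>s. g (fst q, s)) has_real_derivative gv q) (at (snd q))"
    and duv: "\<And>q. q \<in> U \<Longrightarrow> ((\<lambda>s. gu (fst q, s)) has_real_derivative guv q) (at (snd q))"
    and dvu: "\<And>q. q \<in> U \<Longrightarrow> ((\<lambda>s. gv (s, snd q)) has_real_derivative gvu q) (at (fst q))"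
    and cont: "isCont guv p" "isCont gvu p"
  shows "guv p = gvu p"
proof (rule ccontr)
  assume ne: "guv p \<noteq> gvu p"
  define e where "e = \<bar>guv p - gvu p\<bar> / 2"
  have "e > 0" using ne by (simp add: e_def)
  then obtain d1 d2 where d: "d1 > 0" "\<And>q. dist q p < d1 \<Longrightarrow> \<bar>guv q - guv p\<bar> < e"
    "d2 > 0" "\<And>q. dist q p < d2 \<Longrightarrow> \<bar>gvu q - gvu p\<bar> < e"
    using cont unfolding continuous_at_eps_delta dist_real_def by metis
  obtain r where r: "r > 0" "ball p r \<subseteq> U" using U open_contains_ball by blast
  obtain a b where p: "p = (a, b)" by fastforce
  define t where "t = min r (min d1 d2) / 3"
  have t: "t > 0" using r d by (simp add: t_def)
  have near: "dist (x, y) p < min r (min d1 d2)" if "a \<le> x" "x \<le> a + t" "b \<le> y" "y \<le> b + t" for x y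
  proof -
    have "dist (x, y) p \<le> 2 * t" using dist_Pair_le_sum_abs[of x y a b] that p by simp
    with t show ?thesis unfolding t_def by linarith
  qed
  have square: "(x, y) \<in> U" if "a \<le> x" "x \<le> a + t" "b \<le> y" "y \<le> b + t" for x y
    using near[OF that] r(2) by (auto simp: dist_commute)
  obtain x1 y1 x2 y2 where q: "a < x1" "x1 < a + t" "b < y1" "y1 < b + t"
    "a < x2" "x2 < a + t" "b < y2" "y2 < b + t" and eq: "guv (x1, y1) = gvu (x2, y2)"
    by (rule mixed_partials_meet_in_square[OF t square du dv duv dvu])
  have "\<bar>guv (x1, y1) - guv p\<bar> < e" "\<bar>gvu (x2, y2) - gvu p\<bar> < e"
    using d(2)[of "(x1, y1)"] d(4)[of "(x2, y2)"] near[of x1 y1] near[of x2 y2] q by auto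
  with eq show False unfolding e_def by (simp add: abs_if split: if_splits)
qed

lemma schwarz:
  fixes f :: "real \<times> real \<Rightarrow> 'a::real_inner"
  assumes U: "open U" "p \<in> U"
    and diff: "\<And>q. q \<in> U \<Longrightarrow> f differentiable (at q)"
      "\<And>q. q \<in> U \<Longrightarrow> pu f differentiable (at q)"
      "\<And>q. q \<in> U \<Longrightarrow> pv f differentiable (at q)"
    and cont: "continuous_on U (pu (pv f))" "continuous_on U (pv (pu f))"
  shows "pu (pv f) p = pv (pu f) p"
proof -
  have component: "((\<lambda>s. F s \<bullet> c) has_real_derivative (D \<bullet> c)) (at x)"
    if "(F has_vector_derivative D) (at x)" for F :: "real \<Rightarrow> 'a" and D c x
    using has_real_derivative_inner[OF that has_vector_derivative_const[of c]] by simp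
  have "pv (pu f) p \<bullet> c = pu (pv f) p \<bullet> c" for c
  proof (rule schwarz_real[OF U, where g = "\<lambda>q. f q \<bullet> c" and gu = "\<lambda>q. pu f q \<bullet> c"
        and gv = "\<lambda>q. pv f q \<bullet> c"])
    show "isCont (\<lambda>q. pv (pu f) q \<bullet> c) p" "isCont (\<lambda>q. pu (pv f) q \<bullet> c) p"
      using cont U continuous_on_eq_continuous_at by (fastforce intro!: continuous_intros)+
  qed (auto intro!: component has_vector_derivative_pu has_vector_derivative_pv diff)
  from this[of "pv (pu f) p - pu (pv f) p"]
  have "(pv (pu f) p - pu (pv f) p) \<bullet> (pv (pu f) p - pu (pv f) p) = 0"
    by (simp only: inner_diff_left)
  then show ?thesis by simp
qed

lemma smooth_on_C2:
  assumes "smooth_on f U" "q \<in> U"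
  shows "f differentiable (at q)" "pu f differentiable (at q)" "pv f differentiable (at q)"
    "continuous_on U (pu (pv f))" "continuous_on U (pv (pu f))"
proof -
  have "Ck 2 f U" using assms(1) unfolding smooth_on_def by blast
  then show "f differentiable (at q)" "pu f differentiable (at q)" "pv f differentiable (at q)"
    "continuous_on U (pu (pv f))" "continuous_on U (pv (pu f))"
    using assms(2) by (simp_all add: numeral_2_eq_2)
qed

lemma smooth_on_pu_pv_commute:
  fixes f :: "real \<times> real \<Rightarrow> 'a::real_inner"
  assumes "smooth_on f U" "open U" "p \<in> U"
  shows "pu (pv f) p = pv (pu f) p"
  by (rule schwarz[OF assms(2,3)]) (use smooth_on_C2[OF assms(1)] assms(3) in auto)

section \<open>The normal curvature\<close>

lemma has_vector_derivative_frame_projection: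
  fixes a n1 n2 :: "real \<Rightarrow> 'a::real_inner"
  assumes "(a has_vector_derivative a') (at x)"
    and "(n1 has_vector_derivative n1') (at x)" "(n2 has_vector_derivative n2') (at x)"
  shows "((\<lambda>t. (a t \<bullet> n1 t) *\<^sub>R n1 t + (a t \<bullet> n2 t) *\<^sub>R n2 t) has_vector_derivative
    (a' \<bullet> n1 x + a x \<bullet> n1') *\<^sub>R n1 x + (a x \<bullet> n1 x) *\<^sub>R n1' +
    ((a' \<bullet> n2 x + a x \<bullet> n2') *\<^sub>R n2 x + (a x \<bullet> n2 x) *\<^sub>R n2')) (at x)"
  using has_vector_derivative_add[OF
      has_vector_derivative_scaleR[OF has_real_derivative_inner[OF assms(1,2)] assms(2)]
      has_vector_derivative_scaleR[OF has_real_derivative_inner[OF assms(1,3)] assms(3)]]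
  by (simp add: algebra_simps)

lemma pu_nproj:
  fixes a e1 e2 :: "real \<times> real \<Rightarrow> real^4"
  assumes "a differentiable (at p)" "e1 differentiable (at p)" "e2 differentiable (at p)"
  shows "pu (\<lambda>q. nproj e1 e2 q (a q)) p =
    (pu a p \<bullet> e1 p + a p \<bullet> pu e1 p) *\<^sub>R e1 p + (a p \<bullet> e1 p) *\<^sub>R pu e1 p +
    ((pu a p \<bullet> e2 p + a p \<bullet> pu e2 p) *\<^sub>R e2 p + (a p \<bullet> e2 p) *\<^sub>R pu e2 p)"
proof -
  have "((\<lambda>t. nproj e1 e2 (t, snd p) (a (t, snd p))) has_vector_derivative
      (pu a p \<bullet> e1 p + a p \<bullet> pu e1 p) *\<^sub>R e1 p + (a p \<bullet> e1 p) *\<^sub>R pu e1 p +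
      ((pu a p \<bullet> e2 p + a p \<bullet> pu e2 p) *\<^sub>R e2 p + (a p \<bullet> e2 p) *\<^sub>R pu e2 p)) (at (fst p))"
    unfolding nproj_def
    using has_vector_derivative_frame_projection[OF has_vector_derivative_pu[OF assms(1)]
        has_vector_derivative_pu[OF assms(2)] has_vector_derivative_pu[OF assms(3)]]
    by simp
  then show ?thesis
    unfolding pu_def[of "\<lambda>q. nproj e1 e2 q (a q)"] by (rule vector_derivative_at)
qed

lemma pv_nproj:
  fixes a e1 e2 :: "real \<times> real \<Rightarrow> real^4"
  assumes "a differentiable (at p)" "e1 differentiable (at p)" "e2 differentiable (at p)"
  shows "pv (\<lambda>q. nproj e1 e2 q (a q)) p =
    (pv a p \<bullet> e1 p + a p \<bullet> pv e1 p) *\<^sub>R e1 p + (a p \<bullet> e1 p) *\<^sub>R pv e1 p +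
    ((pv a p \<bullet> e2 p + a p \<bullet> pv e2 p) *\<^sub>R e2 p + (a p \<bullet> e2 p) *\<^sub>R pv e2 p)"
proof -
  have "((\<lambda>t. nproj e1 e2 (fst p, t) (a (fst p, t))) has_vector_derivative
      (pv a p \<bullet> e1 p + a p \<bullet> pv e1 p) *\<^sub>R e1 p + (a p \<bullet> e1 p) *\<^sub>R pv e1 p +
      ((pv a p \<bullet> e2 p + a p \<bullet> pv e2 p) *\<^sub>R e2 p + (a p \<bullet> e2 p) *\<^sub>R pv e2 p)) (at (snd p))"
    unfolding nproj_def
    using has_vector_derivative_frame_projection[OF has_vector_derivative_pv[OF assms(1)]
        has_vector_derivative_pv[OF assms(2)] has_vector_derivative_pv[OF assms(3)]]
    by simp
  then show ?thesis
    unfolding pv_def[of "\<lambda>q. nproj e1 e2 q (a q)"] by (rule vector_derivative_at)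
qed

lemma orthonormal_pair_derivatives:
  fixes e1 e2 :: "real \<times> real \<Rightarrow> 'a::real_inner"
  assumes U: "open U" "p \<in> U"
    and orthonormal: "\<forall>q\<in>U. e1 q \<bullet> e1 q = 1 \<and> e2 q \<bullet> e2 q = 1 \<and> e1 q \<bullet> e2 q = 0"
    and diff: "e1 differentiable (at p)" "e2 differentiable (at p)"
  shows "pu e1 p \<bullet> e1 p = 0" "pv e1 p \<bullet> e1 p = 0" "pu e2 p \<bullet> e2 p = 0" "pv e2 p \<bullet> e2 p = 0"
    "pu e2 p \<bullet> e1 p = - (pu e1 p \<bullet> e2 p)" "pv e2 p \<bullet> e1 p = - (pv e1 p \<bullet> e2 p)"
proof -
  have const: "\<forall>q\<in>U. e1 q \<bullet> e1 q = 1" "\<forall>q\<in>U. e2 q \<bullet> e2 q = 1" "\<forall>q\<in>U. e2 q \<bullet> e1 q = 0"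
    using orthonormal by (auto simp: inner_commute)
  show "pu e1 p \<bullet> e1 p = 0" "pv e1 p \<bullet> e1 p = 0"
    using pu_inner_const[OF U const(1) diff(1,1)] pv_inner_const[OF U const(1) diff(1,1)]
    by (simp_all add: inner_commute)
  show "pu e2 p \<bullet> e2 p = 0" "pv e2 p \<bullet> e2 p = 0"
    using pu_inner_const[OF U const(2) diff(2,2)] pv_inner_const[OF U const(2) diff(2,2)]
    by (simp_all add: inner_commute)
  show "pu e2 p \<bullet> e1 p = - (pu e1 p \<bullet> e2 p)" "pv e2 p \<bullet> e1 p = - (pv e1 p \<bullet> e2 p)"
    using pu_inner_const[OF U const(3) diff(2,1)] pv_inner_const[OF U const(3) diff(2,1)]
    by (simp_all add: inner_commute eq_neg_iff_add_eq_0)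
qed

definition normal_curvature :: "(real \<times> real \<Rightarrow> real^4) \<Rightarrow> (real \<times> real \<Rightarrow> real^4) \<Rightarrow> real \<times> real \<Rightarrow> real" where
  "normal_curvature e1 e2 p = pv e1 p \<bullet> pu e2 p - pu e1 p \<bullet> pv e2 p"

lemma normal_curvature_swap: "normal_curvature e1 e2 p = - normal_curvature e2 e1 p"
  by (simp add: normal_curvature_def inner_commute)

lemma Rperp_swap: "Rperp e1 e2 = Rperp e2 e1"
proof -
  have "nproj e1 e2 = nproj e2 e1" by (intro ext) (simp add: nproj_def add.commute)
  then have "Dn_u e1 e2 = Dn_u e2 e1" "Dn_v e1 e2 = Dn_v e2 e1"
    by (intro ext; simp add: Dn_u_def Dn_v_def)+
  then show ?thesis by (intro ext) (simp add: Rperp_def)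
qed

lemma Rperp_on_e1:
  fixes e1 e2 :: "real \<times> real \<Rightarrow> real^4"
  assumes U: "open U" "p \<in> U" and smooth: "smooth_on e1 U" "smooth_on e2 U"
    and orthonormal: "\<forall>q\<in>U. e1 q \<bullet> e1 q = 1 \<and> e2 q \<bullet> e2 q = 1 \<and> e1 q \<bullet> e2 q = 0"
  shows "Rperp e1 e2 e1 p = normal_curvature e1 e2 p *\<^sub>R e2 p"
proof -
  note d1 = smooth_on_C2[OF smooth(1) U(2)] and d2 = smooth_on_C2[OF smooth(2) U(2)]
  note frame_derivatives = orthonormal_pair_derivatives[OF U orthonormal d1(1) d2(1)]
  have "pu (pv e1) p = pv (pu e1) p"
    by (rule smooth_on_pu_pv_commute[OF smooth(1) U])
  then have Dn_commutator: "pu (Dn_v e1 e2 e1) p - pv (Dn_u e1 e2 e1) p =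
      normal_curvature e1 e2 p *\<^sub>R e2 p + (pv e1 p \<bullet> e2 p) *\<^sub>R pu e2 p - (pu e1 p \<bullet> e2 p) *\<^sub>R pv e2 p"
    using pu_nproj[OF d1(3) d1(1) d2(1)] pv_nproj[OF d1(2) d1(1) d2(1)] frame_derivatives(1,2)
    by (simp add: Dn_u_def[abs_def] Dn_v_def[abs_def] normal_curvature_def
        inner_commute[of "pu e1 p" "pv e1 p"] algebra_simps)
  have "Rperp e1 e2 e1 p = nproj e1 e2 p (pu (Dn_v e1 e2 e1) p - pv (Dn_u e1 e2 e1) p)"
    unfolding Rperp_def Dn_u_def Dn_v_def nproj_def by (simp add: inner_diff_left algebra_simps)
  also have "\<dots> = normal_curvature e1 e2 p *\<^sub>R e2 p"
  proof -
    have "e2 p \<bullet> e2 p = 1" "e2 p \<bullet> e1 p = 0" using orthonormal U(2) by (auto simp: inner_commute)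
    with frame_derivatives(3-6) show ?thesis
      unfolding Dn_commutator nproj_def by (simp add: inner_add_left inner_diff_left mult.commute)
  qed
  finally show ?thesis .
qed

lemma Rperp_on_e2:
  fixes e1 e2 :: "real \<times> real \<Rightarrow> real^4"
  assumes "open U" "p \<in> U" "smooth_on e1 U" "smooth_on e2 U"
    and "\<forall>q\<in>U. e1 q \<bullet> e1 q = 1 \<and> e2 q \<bullet> e2 q = 1 \<and> e1 q \<bullet> e2 q = 0"
  shows "Rperp e1 e2 e2 p = - normal_curvature e1 e2 p *\<^sub>R e1 p"
proof -
  have "\<forall>q\<in>U. e2 q \<bullet> e2 q = 1 \<and> e1 q \<bullet> e1 q = 1 \<and> e2 q \<bullet> e1 q = 0"
    using assms(5) by (simp add: inner_commute)
  from Rperp_on_e1[OF assms(1,2,4,3) this] show ?thesis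
    by (simp only: Rperp_swap[of e2 e1] normal_curvature_swap[of e2 e1])
qed

lemma flat_normal_connection_iff_normal_curvature_eq_0:
  fixes e1 e2 :: "real \<times> real \<Rightarrow> real^4"
  assumes "open U" "smooth_on e1 U" "smooth_on e2 U"
    and orthonormal: "\<forall>q\<in>U. e1 q \<bullet> e1 q = 1 \<and> e2 q \<bullet> e2 q = 1 \<and> e1 q \<bullet> e2 q = 0"
  shows "flat_normal_connection U e1 e2 \<longleftrightarrow> (\<forall>p\<in>U. normal_curvature e1 e2 p = 0)"
proof -
  have "e1 p \<noteq> 0" "e2 p \<noteq> 0" if "p \<in> U" for p
    using orthonormal that by auto
  then show ?thesis
    unfolding flat_normal_connection_def using Rperp_on_e1[OF assms(1) _ assms(2-4)]
      Rperp_on_e2[OF assms(1) _ assms(2-4)] by auto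
qed

section \<open>The Ricci equation\<close>

lemma eq_0_if_orthogonal_to_basis:
  fixes u1 u2 u3 u4 w :: "real^4"
  assumes "det (vector [u1, u2, u3, u4] :: real^4^4) \<noteq> 0"
    and "u1 \<bullet> w = 0" "u2 \<bullet> w = 0" "u3 \<bullet> w = 0" "u4 \<bullet> w = 0"
  shows "w = 0"
proof -
  let ?A = "vector [u1, u2, u3, u4] :: real^4^4"
  have rows: "?A $ 1 = u1" "?A $ 2 = u2" "?A $ 3 = u3" "?A $ 4 = u4"
    unfolding vector_def by simp_all
  have "?A *v w = 0"
    unfolding vec_eq_iff forall_4 using assms(2-5)
    by (simp add: matrix_vector_mult_def rows inner_vec_def)
  moreover have "inj ((*v) ?A)"
    using det_nz_iff_inj[of "(*v) ?A"] assms(1) by (simp add: matrix_vector_mul_linear)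
  ultimately show ?thesis by (metis inj_eq matrix_vector_mult_0_right)
qed

lemma gram_determinant_pos:
  fixes u v :: "'a::real_inner"
  assumes "\<forall>a b. a *\<^sub>R u + b *\<^sub>R v = 0 \<longrightarrow> a = 0 \<and> b = 0"
  shows "u \<bullet> u * (v \<bullet> v) - (u \<bullet> v)\<^sup>2 > 0"
proof -
  have "v \<noteq> 0" using assms[rule_format, of 0 1] by auto
  then have v: "v \<bullet> v > 0" by simp
  define y where "y = (v \<bullet> v) *\<^sub>R u - (u \<bullet> v) *\<^sub>R v"
  have "y \<noteq> 0" using assms[rule_format, of "v \<bullet> v" "- (u \<bullet> v)"] v by (auto simp: y_def)
  then have "y \<bullet> y > 0" by simp
  moreover have "y \<bullet> y = (v \<bullet> v) * (u \<bullet> u * (v \<bullet> v) - (u \<bullet> v)\<^sup>2)"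
    unfolding y_def by (simp add: inner_diff_left inner_diff_right inner_commute algebra_simps power2_eq_square)
  ultimately show ?thesis using v by (simp add: zero_less_mult_iff)
qed

lemma regular_surface_gram_pos:
  assumes "regular_surface z U" "p \<in> U"
  shows "EE z p * GG z p - (FF z p)\<^sup>2 > 0"
  using assms gram_determinant_pos[of "pu z p" "pv z p"]
  unfolding regular_surface_def EE_def FF_def GG_def by blast

lemma tangent_normal_decomposition:
  fixes zu zv n1 n2 w :: "real^4"
  assumes normal: "n1 \<bullet> n1 = 1" "n2 \<bullet> n2 = 1" "n1 \<bullet> n2 = 0"
      "n1 \<bullet> zu = 0" "n1 \<bullet> zv = 0" "n2 \<bullet> zu = 0" "n2 \<bullet> zv = 0"
    and gram: "zu \<bullet> zu * (zv \<bullet> zv) - (zu \<bullet> zv)\<^sup>2 > 0"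
    and det: "det (vector [zu, zv, n1, n2] :: real^4^4) \<noteq> 0"
  defines "D \<equiv> zu \<bullet> zu * (zv \<bullet> zv) - (zu \<bullet> zv)\<^sup>2"
  shows "w = (((w \<bullet> zu) * (zv \<bullet> zv) - (w \<bullet> zv) * (zu \<bullet> zv)) / D) *\<^sub>R zu
      + (((w \<bullet> zv) * (zu \<bullet> zu) - (w \<bullet> zu) * (zu \<bullet> zv)) / D) *\<^sub>R zv
      + (w \<bullet> n1) *\<^sub>R n1 + (w \<bullet> n2) *\<^sub>R n2" (is "w = ?a *\<^sub>R zu + ?b *\<^sub>R zv + _ + _")
proof -
  define r where "r = w - ?a *\<^sub>R zu - ?b *\<^sub>R zv - (w \<bullet> n1) *\<^sub>R n1 - (w \<bullet> n2) *\<^sub>R n2"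
  have D: "D > 0" using gram by (simp add: D_def)
  have orth: "zu \<bullet> n1 = 0" "zv \<bullet> n1 = 0" "zu \<bullet> n2 = 0" "zv \<bullet> n2 = 0" "n2 \<bullet> n1 = 0"
    using normal by (simp_all add: inner_commute)
  have "zu \<bullet> r = w \<bullet> zu - ?a * (zu \<bullet> zu) - ?b * (zu \<bullet> zv)"
    unfolding r_def using orth by (simp add: inner_diff_right inner_commute)
  also have "\<dots> = 0" using D unfolding D_def by (simp add: field_simps power2_eq_square)
  finally have r1: "zu \<bullet> r = 0" .
  have "zv \<bullet> r = w \<bullet> zv - ?a * (zu \<bullet> zv) - ?b * (zv \<bullet> zv)"
    unfolding r_def using orth by (simp add: inner_diff_right inner_commute)
  also have "\<dots> = 0" using D unfolding D_def by (simp add: field_simps power2_eq_square)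
  finally have r2: "zv \<bullet> r = 0" .
  have "n1 \<bullet> r = 0" "n2 \<bullet> r = 0"
    unfolding r_def using normal orth by (simp_all add: inner_diff_right inner_commute)
  with r1 r2 have "r = 0" by (intro eq_0_if_orthogonal_to_basis[OF det])
  then show ?thesis unfolding r_def by (simp add: algebra_simps)
qed

lemma inner_tangent_normal_expansion:
  fixes zu zv n1 n2 w w' :: "real^4"
  assumes "n1 \<bullet> n1 = 1" "n2 \<bullet> n2 = 1" "n1 \<bullet> n2 = 0"
      "n1 \<bullet> zu = 0" "n1 \<bullet> zv = 0" "n2 \<bullet> zu = 0" "n2 \<bullet> zv = 0"
    and gram: "zu \<bullet> zu * (zv \<bullet> zv) - (zu \<bullet> zv)\<^sup>2 > 0"
    and "det (vector [zu, zv, n1, n2] :: real^4^4) \<noteq> 0"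
  shows "w \<bullet> w' = ((w \<bullet> zu) * (w' \<bullet> zu) * (zv \<bullet> zv)
        - ((w \<bullet> zu) * (w' \<bullet> zv) + (w \<bullet> zv) * (w' \<bullet> zu)) * (zu \<bullet> zv)
        + (w \<bullet> zv) * (w' \<bullet> zv) * (zu \<bullet> zu)) / (zu \<bullet> zu * (zv \<bullet> zv) - (zu \<bullet> zv)\<^sup>2)
      + (w \<bullet> n1) * (w' \<bullet> n1) + (w \<bullet> n2) * (w' \<bullet> n2)"
proof -
  let ?D = "zu \<bullet> zu * (zv \<bullet> zv) - (zu \<bullet> zv)\<^sup>2"
  note w = tangent_normal_decomposition[OF assms, of w]
  have "w \<bullet> w' = (((w \<bullet> zu) * (zv \<bullet> zv) - (w \<bullet> zv) * (zu \<bullet> zv)) / ?D) * (zu \<bullet> w')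
      + (((w \<bullet> zv) * (zu \<bullet> zu) - (w \<bullet> zu) * (zu \<bullet> zv)) / ?D) * (zv \<bullet> w')
      + (w \<bullet> n1) * (n1 \<bullet> w') + (w \<bullet> n2) * (n2 \<bullet> w')"
    by (subst w) (simp only: inner_add_left inner_scaleR_left)
  also have "\<dots> = (((w \<bullet> zu) * (zv \<bullet> zv) - (w \<bullet> zv) * (zu \<bullet> zv)) * (zu \<bullet> w')
      + ((w \<bullet> zv) * (zu \<bullet> zu) - (w \<bullet> zu) * (zu \<bullet> zv)) * (zv \<bullet> w')) / ?D
      + (w \<bullet> n1) * (n1 \<bullet> w') + (w \<bullet> n2) * (n2 \<bullet> w')"
    by (simp add: add_divide_distrib)
  also have "\<dots> = ((w \<bullet> zu) * (w' \<bullet> zu) * (zv \<bullet> zv)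
        - ((w \<bullet> zu) * (w' \<bullet> zv) + (w \<bullet> zv) * (w' \<bullet> zu)) * (zu \<bullet> zv)
        + (w \<bullet> zv) * (w' \<bullet> zv) * (zu \<bullet> zu)) / ?D
      + (w \<bullet> n1) * (w' \<bullet> n1) + (w \<bullet> n2) * (w' \<bullet> n2)"
    by (simp add: inner_commute algebra_simps)
  finally show ?thesis .
qed

lemma weingarten:
  fixes z e :: "real \<times> real \<Rightarrow> real^4"
  assumes U: "open U" "p \<in> U" and smooth: "smooth_on z U" "smooth_on e U"
    and normal: "\<forall>q\<in>U. e q \<bullet> pu z q = 0 \<and> e q \<bullet> pv z q = 0"
  shows "pu e p \<bullet> pu z p = - (pu (pu z) p \<bullet> e p)" "pv e p \<bullet> pu z p = - (pv (pu z) p \<bullet> e p)"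
    "pu e p \<bullet> pv z p = - (pv (pu z) p \<bullet> e p)" "pv e p \<bullet> pv z p = - (pv (pv z) p \<bullet> e p)"
proof -
  note dz = smooth_on_C2[OF smooth(1) U(2)] and de = smooth_on_C2[OF smooth(2) U(2)]
  have const: "\<forall>q\<in>U. e q \<bullet> pu z q = 0" "\<forall>q\<in>U. e q \<bullet> pv z q = 0"
    using normal by auto
  have "pu (pv z) p = pv (pu z) p" by (rule smooth_on_pu_pv_commute[OF smooth(1) U])
  then show "pu e p \<bullet> pu z p = - (pu (pu z) p \<bullet> e p)" "pv e p \<bullet> pu z p = - (pv (pu z) p \<bullet> e p)"
    "pu e p \<bullet> pv z p = - (pv (pu z) p \<bullet> e p)" "pv e p \<bullet> pv z p = - (pv (pv z) p \<bullet> e p)"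
    using pu_inner_const[OF U const(1) de(1) dz(2)] pv_inner_const[OF U const(1) de(1) dz(2)]
      pu_inner_const[OF U const(2) de(1) dz(3)] pv_inner_const[OF U const(2) de(1) dz(3)]
    by (simp_all add: inner_commute eq_neg_iff_add_eq_0)
qed

lemma nproj_inner:
  assumes "e1 p \<bullet> e1 p = 1" "e2 p \<bullet> e2 p = 1" "e1 p \<bullet> e2 p = 0"
  shows "nproj e1 e2 p w \<bullet> e1 p = w \<bullet> e1 p" "nproj e1 e2 p w \<bullet> e2 p = w \<bullet> e2 p"
proof -
  have "e2 p \<bullet> e1 p = 0" using assms(3) by (simp add: inner_commute)
  with assms show "nproj e1 e2 p w \<bullet> e1 p = w \<bullet> e1 p" "nproj e1 e2 p w \<bullet> e2 p = w \<bullet> e2 p"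
    by (simp_all add: nproj_def inner_add_left)
qed

lemma second_fundamental_form_coefficients:
  assumes "e1 p \<bullet> e1 p = 1" "e2 p \<bullet> e2 p = 1" "e1 p \<bullet> e2 p = 0"
  shows "c11_1 z e1 e2 p = pu (pu z) p \<bullet> e1 p" "c11_2 z e1 e2 p = pu (pu z) p \<bullet> e2 p"
    "c12_1 z e1 e2 p = pv (pu z) p \<bullet> e1 p" "c12_2 z e1 e2 p = pv (pu z) p \<bullet> e2 p"
    "c22_1 z e1 e2 p = pv (pv z) p \<bullet> e1 p" "c22_2 z e1 e2 p = pv (pv z) p \<bullet> e2 p"
  by (simp_all add: c11_1_def c11_2_def c12_1_def c12_2_def c22_1_def c22_2_def
      sigma_uu_def sigma_uv_def sigma_vv_def nproj_inner[of e1 p e2, OF assms])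

lemma ricci_equation_algebra:
  fixes E F G W a11 a12 a22 b11 b12 b22 :: real
  assumes "W \<noteq> 0"
  shows "E * (2 / W * (a12 * b22 - a22 * b12)) + G * (2 / W * (a11 * b12 - a12 * b11))
      - 2 * F * (1 / W * (a11 * b22 - a22 * b11))
    = - 2 * W * ((a12 * b11 * G - (a12 * b12 + a22 * b11) * F + a22 * b12 * E) / W\<^sup>2
      - (a11 * b12 * G - (a11 * b22 + a12 * b12) * F + a12 * b22 * E) / W\<^sup>2)"
  using assms by (simp add: field_simps power2_eq_square)

lemma ricci_equation:
  assumes reg: "regular_surface z U" and frame: "normal_frame z U e1 e2" and p: "p \<in> U"
  shows "EE z p * NN z e1 e2 p + GG z p * LL z e1 e2 p - 2 * FF z p * MM z e1 e2 p
    = - 2 * WW z p * normal_curvature e1 e2 p"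
proof -
  have U: "open U" and smooth_z: "smooth_on z U"
    using reg unfolding regular_surface_def by auto
  have smooth: "smooth_on e1 U" "smooth_on e2 U"
    and orthonormal: "\<forall>q\<in>U. e1 q \<bullet> e1 q = 1 \<and> e2 q \<bullet> e2 q = 1 \<and> e1 q \<bullet> e2 q = 0"
    and normal: "\<forall>q\<in>U. e1 q \<bullet> pu z q = 0 \<and> e1 q \<bullet> pv z q = 0"
      "\<forall>q\<in>U. e2 q \<bullet> pu z q = 0 \<and> e2 q \<bullet> pv z q = 0"
    and det: "det (vector [pu z p, pv z p, e1 p, e2 p] :: real^4^4) \<noteq> 0"
    using frame p unfolding normal_frame_def by auto
  have on: "e1 p \<bullet> e1 p = 1" "e2 p \<bullet> e2 p = 1" "e1 p \<bullet> e2 p = 0"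
    "e1 p \<bullet> pu z p = 0" "e1 p \<bullet> pv z p = 0" "e2 p \<bullet> pu z p = 0" "e2 p \<bullet> pv z p = 0"
    using orthonormal normal p by auto
  have gram: "pu z p \<bullet> pu z p * (pv z p \<bullet> pv z p) - (pu z p \<bullet> pv z p)\<^sup>2 > 0"
    using regular_surface_gram_pos[OF reg p] by (simp add: EE_def FF_def GG_def)
  then have W: "WW z p \<noteq> 0" "(WW z p)\<^sup>2 = pu z p \<bullet> pu z p * (pv z p \<bullet> pv z p) - (pu z p \<bullet> pv z p)\<^sup>2"
    by (simp_all add: WW_def EE_def FF_def GG_def)
  note expansion = inner_tangent_normal_expansion[OF on gram det, folded W(2)]
  note frame_derivatives = orthonormal_pair_derivatives[OF U p orthonormal
      smooth_on_C2(1)[OF smooth(1) p] smooth_on_C2(1)[OF smooth(2) p]]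
  note c = second_fundamental_form_coefficients[of e1 p e2 z, OF on(1-3), symmetric]
  note wein1 = weingarten[OF U p smooth_z smooth(1) normal(1), unfolded c]
    and wein2 = weingarten[OF U p smooth_z smooth(2) normal(2), unfolded c]
  have "normal_curvature e1 e2 p =
      (c12_1 z e1 e2 p * c11_2 z e1 e2 p * GG z p
        - (c12_1 z e1 e2 p * c12_2 z e1 e2 p + c22_1 z e1 e2 p * c11_2 z e1 e2 p) * FF z p
        + c22_1 z e1 e2 p * c12_2 z e1 e2 p * EE z p) / (WW z p)\<^sup>2
    - (c11_1 z e1 e2 p * c12_2 z e1 e2 p * GG z p
        - (c11_1 z e1 e2 p * c22_2 z e1 e2 p + c12_1 z e1 e2 p * c12_2 z e1 e2 p) * FF z p
        + c12_1 z e1 e2 p * c22_2 z e1 e2 p * EE z p) / (WW z p)\<^sup>2"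
    \<comment> \<open>the normal components drop out since \<open>\<langle>\<partial>e\<^sub>1, e\<^sub>1\<rangle> = \<langle>\<partial>e\<^sub>2, e\<^sub>2\<rangle> = 0\<close>\<close>
    unfolding normal_curvature_def expansion[of "pv e1 p" "pu e2 p"] expansion[of "pu e1 p" "pv e2 p"]
    using wein1 wein2 frame_derivatives(1-4) by (simp add: EE_def FF_def GG_def inner_commute)
  then show ?thesis
    unfolding LL_def MM_def NN_def ricci_equation_algebra[OF W(1)] by simp
qed

section \<open>Principal normal curvatures\<close>

lemma nonflat_trace_free_det_neg:
  fixes E F G L M N :: real
  assumes gram: "E * G - F\<^sup>2 > 0" and nonflat: "\<not> (L = 0 \<and> M = 0 \<and> N = 0)"
    and trace: "E * N + G * L - 2 * F * M = 0"
  shows "L * N - M\<^sup>2 < 0"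
proof -
  let ?Q = "G * L\<^sup>2 - 2 * F * L * M + E * M\<^sup>2"  \<comment> \<open>the first fundamental form at \<open>(-M, L)\<close>\<close>
  have "E \<noteq> 0" using gram by auto
  have EN: "E * N = 2 * F * M - G * L" using trace by linarith
  have "E * (L * N - M\<^sup>2) = L * (E * N) - E * M\<^sup>2" by (simp add: algebra_simps)
  also have "\<dots> = - ?Q" unfolding EN by (simp add: algebra_simps power2_eq_square)
  finally have det: "E * (L * N - M\<^sup>2) = - ?Q" .
  have "E * ?Q = (E * M - F * L)\<^sup>2 + (E * G - F\<^sup>2) * L\<^sup>2"
    by (simp add: algebra_simps power2_eq_square)
  also have "\<dots> > 0"
  proof (cases "L = 0")
    case True
    with nonflat trace \<open>E \<noteq> 0\<close> have "E * M - F * L \<noteq> 0" by auto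
    then show ?thesis using True by simp
  next
    case False
    with gram show ?thesis by (simp add: add_nonneg_pos)
  qed
  finally have "E * ?Q > 0" .
  moreover have "E\<^sup>2 * (L * N - M\<^sup>2) = - (E * ?Q)"
    by (simp only: power2_eq_square[of E] mult.assoc det mult_minus_right)
  ultimately have "E\<^sup>2 * (L * N - M\<^sup>2) < 0" by linarith
  moreover have "E\<^sup>2 > 0" using \<open>E \<noteq> 0\<close> by simp
  ultimately show ?thesis by (simp add: mult_less_0_iff)
qed

lemma opposite_roots_iff_linear_coeff_eq_0:
  fixes a b c :: real
  assumes "a > 0" and "b = 0 \<Longrightarrow> c < 0"
  shows "b = 0 \<longleftrightarrow>
    (\<exists>nu1 nu2. (\<forall>x. a * x\<^sup>2 - b * x + c = a * (x - nu1) * (x - nu2)) \<and> nu2 = - nu1 \<and> nu1 \<noteq> 0)"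
proof
  assume "b = 0"
  with assms have c: "c < 0" by simp
  define nu where "nu = sqrt (- c / a)"
  have "nu\<^sup>2 = - c / a" "nu \<noteq> 0"
    unfolding nu_def using assms(1) c by (simp_all add: divide_nonpos_pos less_imp_le)
  then have "a * nu\<^sup>2 = - c" "nu \<noteq> 0" using assms(1) by simp_all
  then have "\<forall>x. a * x\<^sup>2 - b * x + c = a * (x - nu) * (x - - nu)"
    using \<open>b = 0\<close> by (simp add: algebra_simps power2_eq_square)
  with \<open>nu \<noteq> 0\<close> show "\<exists>nu1 nu2. (\<forall>x. a * x\<^sup>2 - b * x + c = a * (x - nu1) * (x - nu2)) \<and> nu2 = - nu1 \<and> nu1 \<noteq> 0"
    by blast
next
  assume "\<exists>nu1 nu2. (\<forall>x. a * x\<^sup>2 - b * x + c = a * (x - nu1) * (x - nu2)) \<and> nu2 = - nu1 \<and> nu1 \<noteq> 0"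
  then obtain nu where "\<forall>x. a * x\<^sup>2 - b * x + c = a * (x - nu) * (x + nu)" by auto
  from this[rule_format, of 1] this[rule_format, of "-1"] show "b = 0"
    by (simp add: algebra_simps)
qed

theorem proposition3p4:
  fixes z e1 e2 :: "real \<times> real \<Rightarrow> real^4" and U :: "(real \<times> real) set"
  assumes "regular_surface z U"
    and "normal_frame z U e1 e2"
    and "\<forall>p\<in>U. \<not> flat_point z e1 e2 p"
  shows "flat_normal_connection U e1 e2 \<longleftrightarrow>
    (\<forall>p\<in>U. \<exists>nu1 nu2. principal_normal_curvatures z e1 e2 p nu1 nu2 \<and> nu2 = - nu1 \<and> nu1 \<noteq> 0)"
proof -
  have U: "open U" using assms(1) unfolding regular_surface_def by simp
  have frame: "smooth_on e1 U" "smooth_on e2 U"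
    "\<forall>q\<in>U. e1 q \<bullet> e1 q = 1 \<and> e2 q \<bullet> e2 q = 1 \<and> e1 q \<bullet> e2 q = 0"
    using assms(2) unfolding normal_frame_def by auto
  have "normal_curvature e1 e2 p = 0 \<longleftrightarrow>
      (\<exists>nu1 nu2. principal_normal_curvatures z e1 e2 p nu1 nu2 \<and> nu2 = - nu1 \<and> nu1 \<noteq> 0)"
    if p: "p \<in> U" for p
  proof -
    note gram = regular_surface_gram_pos[OF assms(1) p]
    then have "WW z p > 0" by (simp add: WW_def)
    then have "normal_curvature e1 e2 p = 0 \<longleftrightarrow>
        EE z p * NN z e1 e2 p + GG z p * LL z e1 e2 p - 2 * FF z p * MM z e1 e2 p = 0"
      by (simp add: ricci_equation[OF assms(1,2) p])
    also have "\<dots> \<longleftrightarrow>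
        (\<exists>nu1 nu2. principal_normal_curvatures z e1 e2 p nu1 nu2 \<and> nu2 = - nu1 \<and> nu1 \<noteq> 0)"
      unfolding principal_normal_curvatures_def
      using assms(3) p gram nonflat_trace_free_det_neg[OF gram]
      by (intro opposite_roots_iff_linear_coeff_eq_0) (auto simp: flat_point_def)
    finally show ?thesis .
  qed
  then show ?thesis
    using flat_normal_connection_iff_normal_curvature_eq_0[OF U frame] by blast
qed

end
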